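(* Let $n\ge3$. Let $\tilde\Lambda_1$ be the set of $\alpha\in\mathbb{R}\setminus\mathrm{ev}(A_n)$ satisfying \[ (\alpha+2)\langle\mathbf 1,(A_n-\alpha I)^{-1}\mathbf 1\rangle-1=0, \] and put $\Lambda_1=\tilde\Lambda_1\setminus(\mathrm{ev}(A_n)\cup\{0,-1,-2\})$. Then \[ \Lambda_1\setminus\{2\}=\{x\in\mathbb{R}:\Phi_n(x)=0\}\setminus(\mathrm{ev}(A_n)\cup\{0,-1,2,-2\}). \]
   Context: $A_n$ is the $n\times n$ adjacency matrix of the path $P_n$ (ones on the super- and subdiagonal, zeros elsewhere), $\mathrm{ev}(A_n)$ its set of eigenvalues, $\mathbf 1$ the all-ones vector. $U_n$ is the Chebyshev polynomial of the second kind, $U_n(\cos\theta)=\sin((n+1)\theta)/\sin\theta$, $\tilde U_n(x)=U_n(x/2)$, and $\Phi_n(x)=((n+1)x^2-6x-4n)\tilde U_n(x)+2(x+2)\tilde U_{n-1}(x)+2(x+2)$. *)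

theory Defs
  imports "Jordan_Normal_Form.Char_Poly" "Jordan_Normal_Form.Gauss_Jordan_Elimination"
begin

definition path_adj :: "nat \<Rightarrow> real mat" where
  "path_adj n = mat n n (\<lambda>(i,j). if i = j + 1 \<or> j = i + 1 then 1 else 0)"

definition path_ev :: "nat \<Rightarrow> real set" where
  "path_ev n = {a. eigenvalue (path_adj n) a}"

definition ones_vec :: "nat \<Rightarrow> real vec" where
  "ones_vec n = vec n (\<lambda>_. 1)"

(* matrix inverse (only meaningful for invertible matrices) *)
definition mat_inv :: "real mat \<Rightarrow> real mat" where
  "mat_inv M = the (mat_inverse M)"

(* Chebyshev polynomials of the second kind, U_0 = 1, U_1 = 2x, U_{k+2} = 2x U_{k+1} - U_k,
   so that U_k(cos t) = sin((k+1)t)/sin t *)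
fun chebU :: "nat \<Rightarrow> real \<Rightarrow> real" where
  "chebU 0 x = 1"
| "chebU (Suc 0) x = 2 * x"
| "chebU (Suc (Suc k)) x = 2 * x * chebU (Suc k) x - chebU k x"

definition chebU_t :: "nat \<Rightarrow> real \<Rightarrow> real" where
  "chebU_t k x = chebU k (x / 2)"

definition Phi :: "nat \<Rightarrow> real \<Rightarrow> real" where
  "Phi n x = ((real n + 1) * x^2 - 6 * x - 4 * real n) * chebU_t n x
            + 2 * (x + 2) * chebU_t (n - 1) x + 2 * (x + 2)"

definition Lambda1_tilde :: "nat \<Rightarrow> real set" where
  "Lambda1_tilde n = {\<alpha>. \<alpha> \<notin> path_ev n \<and>
     (\<alpha> + 2) * (ones_vec n \<bullet> (mat_inv (path_adj n - \<alpha> \<cdot>\<^sub>m 1\<^sub>m n) *\<^sub>v ones_vec n)) - 1 = 0}"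

definition Lambda1 :: "nat \<Rightarrow> real set" where
  "Lambda1 n = Lambda1_tilde n - (path_ev n \<union> {0, -1, -2})"

end

theory Submission
  imports Defs
begin

text \<open>Put \<open>w 0 = 0\<close> and \<open>w k = \<tilde>U (k - 1) x\<close>, so that \<open>w (k + 2) = x w (k + 1) - w k\<close>.
  The equation \<open>(A - x I) z = \<one>\<close> is the recurrence \<open>z (k - 1) + z (k + 1) - x z k = 1\<close> with
  boundary values \<open>z 0 = z (n + 1) = 0\<close>. Its solution is the constant \<open>1 / (2 - x)\<close> corrected by
  the homogeneous solution \<open>w k + w (n + 1 - k)\<close> divided by \<open>w (n + 1) = \<tilde>U n x\<close>; this
  divisor vanishes only on the spectrum, because \<open>w (n + 1) = 0\<close> makes \<open>(w 1, \<dots>, w n)\<close> an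
  eigenvector. Summing the entries with the telescoping identity
  \<open>(2 - x) (w 1 + \<dots> + w n) = 1 - w (n + 1) + w n\<close> gives \<open>\<langle>\<one>, (A - x I)\<inverse> \<one>\<rangle>\<close> in closed form,
  and clearing the denominator \<open>(2 - x)\<^sup>2 \<tilde>U n x\<close> turns the equation defining \<open>\<tilde>\<Lambda>\<^sub>1\<close> into
  \<open>\<Phi> n x = 0\<close>.\<close>

definition shifted_chebU_t :: "real \<Rightarrow> nat \<Rightarrow> real" where
  "shifted_chebU_t x k = (if k = 0 then 0 else chebU_t (k - 1) x)"

lemma shifted_chebU_t_0 [simp]: "shifted_chebU_t x 0 = 0"
  by (simp add: shifted_chebU_t_def)

lemma shifted_chebU_t_1 [simp]: "shifted_chebU_t x (Suc 0) = 1"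
  by (simp add: shifted_chebU_t_def chebU_t_def)

lemma shifted_chebU_t_rec:
  "shifted_chebU_t x (k + 2) = x * shifted_chebU_t x (k + 1) - shifted_chebU_t x k"
  by (cases k) (simp_all add: shifted_chebU_t_def chebU_t_def)

lemma sum_shifted_chebU_t:
  "(2 - x) * (\<Sum>i<n. shifted_chebU_t x (i + 1))
     = 1 - shifted_chebU_t x (n + 1) + shifted_chebU_t x n"
proof (induction n)
  case (Suc n)
  then show ?case
    using shifted_chebU_t_rec[of x n] by (simp add: distrib_left left_diff_distrib)
qed simp

lemma Phi_eq_shifted_chebU_t:
  assumes "n \<ge> 1"
  shows "Phi n x = ((real n + 1) * x^2 - 6 * x - 4 * real n) * shifted_chebU_t x (n + 1)
                   + 2 * (x + 2) * shifted_chebU_t x n + 2 * (x + 2)"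
  using assms by (simp add: Phi_def shifted_chebU_t_def)

lemma path_adj_carrier: "path_adj n \<in> carrier_mat n n"
  by (simp add: path_adj_def)

lemma path_adj_mult_vec_padded:
  assumes "z 0 = 0" and "z (n + 1) = 0"
  shows "path_adj n *\<^sub>v vec n (\<lambda>i. z (i + 1)) = vec n (\<lambda>i. z i + z (i + 2))"
proof (rule eq_vecI)
  fix i assume "i < dim_vec (vec n (\<lambda>i. z i + z (i + 2)))"
  then have i: "i < n" by simp
  have "(path_adj n *\<^sub>v vec n (\<lambda>i. z (i + 1))) $ i
      = (\<Sum>j<n. (if i = j + 1 \<or> j = i + 1 then 1 else 0) * z (j + 1))"
    using i by (simp add: path_adj_def lessThan_atLeast0 scalar_prod_def)
  also have "\<dots> = (\<Sum>j<n. if j + 1 = i then z (j + 1) else 0)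
                 + (\<Sum>j<n. if j = i + 1 then z (j + 1) else 0)"
    unfolding sum.distrib[symmetric] by (rule sum.cong) auto
  also have "(\<Sum>j<n. if j + 1 = i then z (j + 1) else 0) = z i"
    using i assms(1) by (cases i) (simp_all add: sum.If_cases)
  also have "(\<Sum>j<n. if j = i + 1 then z (j + 1) else 0) = z (i + 2)"
  proof (cases "i + 1 < n")
    case False
    then have "i + 2 = n + 1" using i by simp
    then show ?thesis using False assms(2) by simp
  qed (simp add: sum.delta')
  finally show "(path_adj n *\<^sub>v vec n (\<lambda>i. z (i + 1))) $ i = vec n (\<lambda>i. z i + z (i + 2)) $ i"
    using i by simp
qed (simp add: path_adj_def)

lemma eigenvalue_path_adj_if_shifted_chebU_t_zero:
  assumes "n \<ge> 1" and "shifted_chebU_t x (n + 1) = 0"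
  shows "eigenvalue (path_adj n) x"
proof -
  define v where "v = vec n (\<lambda>i. shifted_chebU_t x (i + 1))"
  have "path_adj n *\<^sub>v v = vec n (\<lambda>i. shifted_chebU_t x i + shifted_chebU_t x (i + 2))"
    unfolding v_def using assms(2) by (intro path_adj_mult_vec_padded) simp_all
  also have "\<dots> = x \<cdot>\<^sub>v v"
    unfolding v_def using shifted_chebU_t_rec[of x] by (intro eq_vecI) simp_all
  finally have "path_adj n *\<^sub>v v = x \<cdot>\<^sub>v v" .
  moreover have "v \<noteq> 0\<^sub>v n"
    using assms(1) by (auto simp: v_def dest: arg_cong[where f = "\<lambda>u. u $ 0"])
  ultimately show ?thesis
    unfolding eigenvalue_def eigenvector_def
    by (intro exI[of _ v]) (simp add: v_def path_adj_def)
qed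

lemma shifted_chebU_t_nonzero:
  assumes "n \<ge> 1" and "x \<notin> path_ev n"
  shows "shifted_chebU_t x (n + 1) \<noteq> 0"
  using assms eigenvalue_path_adj_if_shifted_chebU_t_zero by (auto simp: path_ev_def)

lemma smult_one_mat_mult_vec:
  assumes "v \<in> carrier_vec n"
  shows "((x::real) \<cdot>\<^sub>m 1\<^sub>m n) *\<^sub>v v = x \<cdot>\<^sub>v v"
proof (rule eq_vecI)
  fix i assume "i < dim_vec (x \<cdot>\<^sub>v v)"
  then have i: "i < n" using assms by simp
  have "((x \<cdot>\<^sub>m 1\<^sub>m n) *\<^sub>v v) $ i = (\<Sum>j<n. if i = j then x * v $ j else 0)"
    using i assms unfolding scalar_prod_def by (auto simp: lessThan_atLeast0 intro!: sum.cong)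
  also have "\<dots> = x * v $ i"
    using i by (simp add: sum.delta)
  finally show "((x \<cdot>\<^sub>m 1\<^sub>m n) *\<^sub>v v) $ i = (x \<cdot>\<^sub>v v) $ i"
    using i assms by simp
qed (use assms in simp)

lemma det_shift_nonzero_if_not_eigenvalue:
  fixes A :: "'a::field mat"
  assumes A: "A \<in> carrier_mat n n" and "\<not> eigenvalue A x"
  shows "det (A - x \<cdot>\<^sub>m 1\<^sub>m n) \<noteq> 0"
proof -
  have "char_matrix A x = A - x \<cdot>\<^sub>m 1\<^sub>m n"
    unfolding char_matrix_def using A by (intro eq_matI) auto
  then show ?thesis
    using eigenvalue_det[OF A, of x] assms(2) by simp
qed

lemma mat_inv_mult_vec_eqI:
  assumes M: "M \<in> carrier_mat n n" and "det M \<noteq> 0"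
    and y: "y \<in> carrier_vec n" and "M *\<^sub>v y = b"
  shows "mat_inv M *\<^sub>v b = y"
proof -
  have "M \<in> Units (ring_mat TYPE(real) n ())"
    using det_non_zero_imp_unit[OF M] assms(2) .
  then obtain B where "mat_inverse M = Some B"
    using mat_inverse(1)[OF M] by fastforce
  with mat_inverse(2)[OF M] have B: "B \<in> carrier_mat n n" "B * M = 1\<^sub>m n" "mat_inv M = B"
    by (auto simp: mat_inv_def)
  have "mat_inv M *\<^sub>v b = B *\<^sub>v (M *\<^sub>v y)"
    using B assms(4) by simp
  also have "\<dots> = (B * M) *\<^sub>v y"
    using B(1) M y by simp
  finally show ?thesis
    using B y by simp
qed

lemma path_adj_resolvent_ones:
  assumes "n \<ge> 1" and x: "x \<notin> path_ev n" and "x \<noteq> 2"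
  shows "mat_inv (path_adj n - x \<cdot>\<^sub>m 1\<^sub>m n) *\<^sub>v ones_vec n
    = vec n (\<lambda>i. (1 - (shifted_chebU_t x (i + 1) + shifted_chebU_t x (n - i))
                       / shifted_chebU_t x (n + 1)) / (2 - x))"
    (is "_ = ?y")
proof -
  let ?w = "shifted_chebU_t x"
  define c where "c = 1 / (2 - x)"
  define z where "z k = (1 - (?w k + ?w (n + 1 - k)) / ?w (n + 1)) / (2 - x)" for k
  have W: "?w (n + 1) \<noteq> 0"
    using shifted_chebU_t_nonzero assms(1) x .
  have "2 - x \<noteq> 0"
    using assms(3) by simp
  have z_lin: "z k = c - c / ?w (n + 1) * (?w k + ?w (n + 1 - k))" for k
    unfolding z_def c_def by (simp add: diff_divide_distrib)
  have z_rec: "z k + z (k + 2) - x * z (k + 1) = 1" if "k < n" for k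
  proof -
    obtain m where "n = k + m + 1"
      using \<open>k < n\<close> less_imp_Suc_add by fastforce
    then have reflect: "n + 1 - k = m + 2" "n + 1 - (k + 1) = m + 1" "n + 1 - (k + 2) = m"
      by auto
    have "z k + z (k + 2) - x * z (k + 1) = c * (2 - x) - c / ?w (n + 1)
      * ((?w k + ?w (k + 2) - x * ?w (k + 1)) + (?w m + ?w (m + 2) - x * ?w (m + 1)))"
      unfolding z_lin reflect by (simp add: algebra_simps)
    also have "\<dots> = 1"
      using shifted_chebU_t_rec[of x k] shifted_chebU_t_rec[of x m] \<open>2 - x \<noteq> 0\<close>
      by (simp add: c_def)
    finally show ?thesis .
  qed
  have y: "?y = vec n (\<lambda>i. z (i + 1))"
    by (rule eq_vecI) (simp_all add: z_def)
  have "path_adj n *\<^sub>v ?y = vec n (\<lambda>i. z i + z (i + 2))"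
    unfolding y using W by (intro path_adj_mult_vec_padded) (simp_all add: z_def)
  then have "(path_adj n - x \<cdot>\<^sub>m 1\<^sub>m n) *\<^sub>v ?y = vec n (\<lambda>i. z i + z (i + 2)) - x \<cdot>\<^sub>v ?y"
    by (simp add: minus_mult_distrib_mat_vec[OF path_adj_carrier] smult_one_mat_mult_vec)
  also have "\<dots> = ones_vec n"
    unfolding y ones_vec_def using z_rec by (intro eq_vecI) simp_all
  finally show ?thesis
    using path_adj_carrier det_shift_nonzero_if_not_eigenvalue x
    by (intro mat_inv_mult_vec_eqI[of _ n]) (auto simp: path_ev_def)
qed

lemma ones_inner_path_adj_resolvent:
  assumes "n \<ge> 1" and "x \<notin> path_ev n" and "x \<noteq> 2"
  shows "ones_vec n \<bullet> (mat_inv (path_adj n - x \<cdot>\<^sub>m 1\<^sub>m n) *\<^sub>v ones_vec n)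
    = (real n - 2 * (1 - shifted_chebU_t x (n + 1) + shifted_chebU_t x n)
                    / ((2 - x) * shifted_chebU_t x (n + 1))) / (2 - x)"
proof -
  let ?w = "shifted_chebU_t x"
  let ?S = "\<Sum>i<n. ?w (i + 1)"
  have reflect: "(\<Sum>i<n. ?w (n - i)) = ?S"
  proof -
    have "(\<Sum>i<n. ?w (n - i)) = (\<Sum>i<n. (\<lambda>j. ?w (j + 1)) (n - Suc i))"
      by (rule sum.cong) (auto simp: Suc_diff_Suc)
    also have "\<dots> = ?S"
      by (rule sum.nat_diff_reindex)
    finally show ?thesis .
  qed
  have "ones_vec n \<bullet> (mat_inv (path_adj n - x \<cdot>\<^sub>m 1\<^sub>m n) *\<^sub>v ones_vec n)
      = (\<Sum>i<n. (1 - (?w (i + 1) + ?w (n - i)) / ?w (n + 1)) / (2 - x))"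
    unfolding path_adj_resolvent_ones[OF assms]
    by (simp add: ones_vec_def scalar_prod_def lessThan_atLeast0)
  also have "\<dots> = (real n - (?S + (\<Sum>i<n. ?w (n - i))) / ?w (n + 1)) / (2 - x)"
    by (simp add: sum_divide_distrib[symmetric] sum_subtractf sum.distrib)
  also have "\<dots> = (real n - 2 * ?S / ?w (n + 1)) / (2 - x)"
    unfolding reflect by simp
  also have "?S = (1 - ?w (n + 1) + ?w n) / (2 - x)"
    using sum_shifted_chebU_t[of x n] assms(3) by (simp add: field_simps)
  finally show ?thesis
    by simp
qed

lemma Lambda1_equation_iff_Phi_zero:
  assumes "n \<ge> 1" and "x \<notin> path_ev n" and "x \<noteq> 2"
  shows "(x + 2) * (ones_vec n \<bullet> (mat_inv (path_adj n - x \<cdot>\<^sub>m 1\<^sub>m n) *\<^sub>v ones_vec n)) - 1 = 0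
     \<longleftrightarrow> Phi n x = 0"
proof -
  define W where "W = shifted_chebU_t x (n + 1)"
  define a where "a = shifted_chebU_t x n"
  define d where "d = 2 - x"
  have "W \<noteq> 0" "d \<noteq> 0"
    using shifted_chebU_t_nonzero[OF assms(1,2)] assms(3) by (auto simp: W_def d_def)
  have x: "x = 2 - d"
    by (simp add: d_def)
  have Phi: "Phi n x = ((real n + 1) * x^2 - 6 * x - 4 * real n) * W + 2 * (x + 2) * a + 2 * (x + 2)"
    unfolding W_def a_def by (rule Phi_eq_shifted_chebU_t[OF assms(1)])
  have "(x + 2) * (ones_vec n \<bullet> (mat_inv (path_adj n - x \<cdot>\<^sub>m 1\<^sub>m n) *\<^sub>v ones_vec n)) - 1
      = (x + 2) * ((real n - 2 * (1 - W + a) / (d * W)) / d) - 1"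
    unfolding ones_inner_path_adj_resolvent[OF assms] W_def a_def d_def ..
  also have "\<dots> = - Phi n x / (d\<^sup>2 * W)"
    unfolding Phi unfolding x using \<open>W \<noteq> 0\<close> \<open>d \<noteq> 0\<close> by (simp add: field_simps power2_eq_square)
  finally show ?thesis
    using \<open>W \<noteq> 0\<close> \<open>d \<noteq> 0\<close> by simp
qed

theorem proposition4p5:
  fixes n :: nat
  assumes "n \<ge> 3"
  shows "Lambda1 n - {2} = {x. Phi n x = 0} - (path_ev n \<union> {0, -1, 2, -2})"
  using Lambda1_equation_iff_Phi_zero[of n] assms
  unfolding Lambda1_def Lambda1_tilde_def by auto

end
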